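(* Let $\lambda \ge \aleph_2$ be a regular cardinal and $S \subseteq \lambda$ stationary. Then the following are equivalent: (1) $\mathsf{uDSR}({<}\lambda, S)$; (2) $\mathsf{DSR}({<}\lambda, S)$; (3) $\mathsf{OSR}(S)$; (4) for every matrix $\langle S_{\alpha,i} \mid \alpha<\lambda,\ i<j_\alpha\rangle$ of stationary subsets of $S$ with $j_\alpha<\lambda$ for all $\alpha<\lambda$, there is $\gamma<\lambda$ with $\mathrm{cf}(\gamma)>\omega$ such that $S_{\alpha,i}$ reflects at $\gamma$ for all $\alpha<\gamma$ and all $i<j_\alpha$.
   Context: A set $T$ of ordinals reflects at an ordinal $\gamma$ if $\mathrm{cf}(\gamma)>\omega$ and $T\cap\gamma$ is stationary in $\gamma$. For $\lambda$ regular uncountable, $S\subseteq\lambda$ stationary and $\kappa\le\lambda$: $\mathsf{DSR}({<}\kappa,S)$ asserts that whenever $\langle S_{\alpha,i}\mid\alpha<\lambda,\ i<j_\alpha\rangle$ is a matrix of stationary subsets of $S$ with $j_\alpha<\kappa$ for all $\alpha$, there are $\gamma<\lambda$ of uncountable cofinality and a club $F\subseteq\gamma$ such that $S_{\alpha,i}$ reflects at $\gamma$ for all $\alpha\in F$, $i<j_\alpha$. $\mathsf{uDSR}({<}\kappa,S)$ is the same with "club $F\subseteq\gamma$" replaced by "unbounded $F\subseteq\gamma$". $\mathsf{OSR}(S)$ asserts that for every sequence $\langle S_\alpha\mid\alpha<\lambda\rangle$ of stationary subsets of $S$ there is $\delta<\lambda$ with $\mathrm{cf}(\delta)>\omega$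 such that $S_\alpha$ reflects at $\delta$ for all $\alpha<\delta$. *)

theory Defs
  imports Main "HOL-Library.Countable_Set"
begin

text \<open>Ordinals below a regular cardinal lambda are modelled as the elements of a
  well-ordered type 'a whose order type is lambda (lambda = UNIV).
  A "bound" D is either {..<gamma} (the ordinal gamma) or UNIV (lambda itself).\<close>

definition unbounded_in :: "'a::wellorder set \<Rightarrow> 'a set \<Rightarrow> bool" where
  "unbounded_in D C \<longleftrightarrow> C \<subseteq> D \<and> (\<forall>b\<in>D. \<exists>x\<in>C. b < x)"

definition closed_in :: "'a::wellorder set \<Rightarrow> 'a set \<Rightarrow> bool" where
  "closed_in D C \<longleftrightarrow>
     (\<forall>b\<in>D. (\<exists>x\<in>C. x < b) \<and> (\<forall>d<b. \<exists>x\<in>C. d < x \<and> x < b) \<longrightarrow> b \<in> C)"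

definition club_in :: "'a::wellorder set \<Rightarrow> 'a set \<Rightarrow> bool" where
  "club_in D C \<longleftrightarrow> unbounded_in D C \<and> closed_in D C"

definition stationary_in :: "'a::wellorder set \<Rightarrow> 'a set \<Rightarrow> bool" where
  "stationary_in D T \<longleftrightarrow> T \<subseteq> D \<and> (\<forall>C. club_in D C \<longrightarrow> T \<inter> C \<noteq> {})"

definition uncountable_cf :: "'a::wellorder \<Rightarrow> bool" where
  "uncountable_cf g \<longleftrightarrow> (\<exists>b. b < g) \<and>
     (\<forall>A. A \<subseteq> {..<g} \<and> countable A \<longrightarrow> (\<exists>b<g. \<forall>x\<in>A. x < b))"

definition reflects_at :: "'a::wellorder set \<Rightarrow> 'a \<Rightarrow> bool" where
  "reflects_at T g \<longleftrightarrow> uncountable_cf g \<and> stationary_in {..<g} (T \<inter> {..<g})"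

definition regular_ge_aleph2 :: "'a::wellorder itself \<Rightarrow> bool" where
  "regular_ge_aleph2 _ \<longleftrightarrow>
     (\<forall>x::'a. ordLess2 (card_of {..<x}) (card_of (UNIV::'a set))) \<and>
     (\<forall>A::'a set. ordLess2 (card_of A) (card_of (UNIV::'a set)) \<longrightarrow> (\<exists>b. \<forall>x\<in>A. x < b)) \<and>
     ordLess2 (cardSuc natLeq) (card_of (UNIV::'a set))"

text \<open>DSR(<kappa, S): lengths j alpha range over K, where K = {..<kappa} or K = UNIV (kappa = lambda).\<close>
definition DSR :: "'a::wellorder set \<Rightarrow> 'a set \<Rightarrow> bool" where
  "DSR K S \<longleftrightarrow> (\<forall>(M::'a \<Rightarrow> 'a \<Rightarrow> 'a set) (j::'a \<Rightarrow> 'a).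
     (\<forall>a. j a \<in> K) \<and> (\<forall>a i. i < j a \<longrightarrow> M a i \<subseteq> S \<and> stationary_in UNIV (M a i)) \<longrightarrow>
     (\<exists>g F. uncountable_cf g \<and> club_in {..<g} F \<and> (\<forall>a\<in>F. \<forall>i<j a. reflects_at (M a i) g)))"

definition uDSR :: "'a::wellorder set \<Rightarrow> 'a set \<Rightarrow> bool" where
  "uDSR K S \<longleftrightarrow> (\<forall>(M::'a \<Rightarrow> 'a \<Rightarrow> 'a set) (j::'a \<Rightarrow> 'a).
     (\<forall>a. j a \<in> K) \<and> (\<forall>a i. i < j a \<longrightarrow> M a i \<subseteq> S \<and> stationary_in UNIV (M a i)) \<longrightarrow>
     (\<exists>g F. uncountable_cf g \<and> unbounded_in {..<g} F \<and> (\<forall>a\<in>F. \<forall>i<j a. reflects_at (M a i) g)))"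

definition OSR :: "'a::wellorder set \<Rightarrow> bool" where
  "OSR S \<longleftrightarrow> (\<forall>T::'a \<Rightarrow> 'a set.
     (\<forall>a. T a \<subseteq> S \<and> stationary_in UNIV (T a)) \<longrightarrow>
     (\<exists>d. uncountable_cf d \<and> (\<forall>a<d. reflects_at (T a) d)))"

end

theory Submission
  imports Defs
begin

text \<open>uDSR implies OSR by applying it to the matrix whose row \<open>\<alpha>\<close> lists \<open>S\<^sub>i\<close> for \<open>i < \<alpha>\<close>;
  OSR yields the diagonal form (4) by coding the pairs \<open>(\<alpha>, i)\<close> as single indices \<open>\<beta> < \<lambda>\<close> and
  cutting the \<open>\<beta>\<close>-th set above a bound for all codes of row \<open>\<beta>\<close>, so that reflection of
  that set at \<open>\<delta>\<close> forces all codes of row \<open>\<beta>\<close> below \<open>\<delta>\<close>; (4) implies DSR with the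
  club \<open>F = \<gamma>\<close>, and DSR trivially implies uDSR.\<close>

definition diagonal_matrix_reflection :: "'a::wellorder set \<Rightarrow> bool" where
  "diagonal_matrix_reflection S \<longleftrightarrow>
     (\<forall>(M::'a \<Rightarrow> 'a \<Rightarrow> 'a set) (j::'a \<Rightarrow> 'a).
        (\<forall>a i. i < j a \<longrightarrow> M a i \<subseteq> S \<and> stationary_in UNIV (M a i)) \<longrightarrow>
        (\<exists>g. uncountable_cf g \<and> (\<forall>a<g. \<forall>i<j a. reflects_at (M a i) g)))"

lemma uncountable_cf_gt_ex:
  assumes "uncountable_cf g" "b < g"
  shows "\<exists>x<g. b < x"
  using assms unfolding uncountable_cf_def
  by (elim conjE allE[of _ "{b}"]) auto

lemma uncountable_cf_club_in_lessThan:
  "uncountable_cf g \<Longrightarrow> club_in {..<g} {..<g}"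
  unfolding club_in_def unbounded_in_def closed_in_def
  using uncountable_cf_gt_ex by fastforce

lemma reflects_at_mono: "reflects_at T g \<Longrightarrow> T \<subseteq> T' \<Longrightarrow> reflects_at T' g"
  unfolding reflects_at_def stationary_in_def by blast

lemma not_reflects_at_empty: "\<not> reflects_at {} g"
  unfolding reflects_at_def stationary_in_def
  using uncountable_cf_club_in_lessThan by blast

lemma reflects_at_Int_atLeast_imp_less:
  assumes "reflects_at (T \<inter> {e..}) g"
  shows "e < g"
proof (rule ccontr)
  assume "\<not> e < g"
  then have "T \<inter> {e..} \<inter> {..<g} = {}" by auto
  with assms have "reflects_at {} g" unfolding reflects_at_def by simp
  with not_reflects_at_empty show False by contradiction
qed

lemma club_in_UNIV_Int_atLeast:
  fixes C :: "'a::wellorder set"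
  assumes club: "club_in UNIV C" and gt_ex: "\<And>b::'a. \<exists>x. b < x"
  shows "club_in UNIV (C \<inter> {e..})"
  unfolding club_in_def unbounded_in_def closed_in_def
proof (intro conjI ballI impI)
  fix b
  obtain y where y: "max b e < y" using gt_ex by blast
  obtain x where "x \<in> C" "y < x"
    using club unfolding club_in_def unbounded_in_def by blast
  with y show "\<exists>x\<in>C \<inter> {e..}. b < x" by (intro bexI[of _ x]) auto
next
  fix b
  assume "(\<exists>x\<in>C \<inter> {e..}. x < b) \<and> (\<forall>d<b. \<exists>x\<in>C \<inter> {e..}. d < x \<and> x < b)"
  then have below: "\<exists>x\<in>C. x < b" and limit: "\<forall>d<b. \<exists>x\<in>C. d < x \<and> x < b"
    and "e \<le> b"
    by auto
  from below limit club have "b \<in> C" unfolding club_in_def closed_in_def by blast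
  with \<open>e \<le> b\<close> show "b \<in> C \<inter> {e..}" by simp
qed simp

lemma stationary_in_UNIV_Int_atLeast:
  fixes T :: "'a::wellorder set"
  assumes stat: "stationary_in UNIV T" and gt_ex: "\<And>b::'a. \<exists>x. b < x"
  shows "stationary_in UNIV (T \<inter> {e..})"
  unfolding stationary_in_def
proof (intro conjI allI impI)
  fix C :: "'a set"
  assume "club_in UNIV C"
  then have "club_in UNIV (C \<inter> {e..})" using gt_ex by (rule club_in_UNIV_Int_atLeast)
  with stat have "T \<inter> (C \<inter> {e..}) \<noteq> {}" unfolding stationary_in_def by blast
  then show "T \<inter> {e..} \<inter> C \<noteq> {}" by (simp add: Int_ac)
qed simp

lemma infinite_imp_inj_pairing:
  assumes "infinite (UNIV :: 'a set)"
  shows "\<exists>f :: 'a \<times> 'a \<Rightarrow> 'a. inj f"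
proof -
  have "ordLeq3 (card_of ((UNIV::'a set) \<times> (UNIV::'a set))) (card_of (UNIV::'a set))"
    using card_of_Times_same_infinite[OF assms] by (rule ordIso_imp_ordLeq)
  then have "\<exists>f. inj_on f ((UNIV::'a set) \<times> (UNIV::'a set)) \<and> f ` (UNIV \<times> UNIV) \<subseteq> (UNIV::'a set)"
    by (simp only: card_of_ordLeq)
  then show ?thesis by auto
qed

context
  assumes regular: "regular_ge_aleph2 TYPE('a::wellorder)"
begin

lemma regular_ge_aleph2_lessThan_small:
  "ordLess2 (card_of {..<x::'a}) (card_of (UNIV::'a set))"
  using regular unfolding regular_ge_aleph2_def by (elim conjE allE)

lemma regular_ge_aleph2_small_bounded:
  "ordLess2 (card_of (A::'a set)) (card_of (UNIV::'a set)) \<Longrightarrow> \<exists>b. \<forall>x\<in>A. x < b"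
  using regular unfolding regular_ge_aleph2_def by (elim conjE allE impE)

lemma regular_ge_aleph2_infinite: "infinite (UNIV::'a set)"
proof -
  have "ordLess2 (cardSuc natLeq) (card_of (UNIV::'a set))"
    using regular unfolding regular_ge_aleph2_def by (elim conjE)
  then have "ordLess2 natLeq (card_of (UNIV::'a set))"
    using cardSuc_greater[OF natLeq_Card_order] ordLess_imp_ordLeq ordLeq_ordLess_trans by blast
  then show ?thesis
    using infinite_iff_natLeq_ordLeq ordLess_imp_ordLeq by blast
qed

lemma regular_ge_aleph2_gt_ex: "\<exists>x. b < (x::'a)"
proof -
  have "ordLess2 (card_of {b}) (card_of (UNIV::'a set))"
    using finite_ordLess_infinite[OF card_of_Well_order card_of_Well_order, of "{b}" UNIV]
      regular_ge_aleph2_infinite by (simp add: Field_card_of)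
  then show ?thesis using regular_ge_aleph2_small_bounded by blast
qed

lemma regular_ge_aleph2_image_lessThan_bounded:
  fixes h :: "'a \<Rightarrow> 'a"
  shows "\<exists>e. \<forall>i<b. h i < e"
proof -
  have "ordLess2 (card_of (h ` {..<b})) (card_of (UNIV::'a set))"
    by (rule ordLeq_ordLess_trans[OF card_of_image regular_ge_aleph2_lessThan_small])
  then obtain e where "\<forall>x\<in>h ` {..<b}. x < e"
    by (rule regular_ge_aleph2_small_bounded[THEN exE])
  then show ?thesis by auto
qed

lemma OSR_imp_diagonal_matrix_reflection:
  assumes osr: "OSR S" and stat: "stationary_in UNIV S"
  shows "diagonal_matrix_reflection (S::'a set)"
  unfolding diagonal_matrix_reflection_def
proof (intro allI impI)
  fix M :: "'a \<Rightarrow> 'a \<Rightarrow> 'a set" and j :: "'a \<Rightarrow> 'a"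
  assume M: "\<forall>a i. i < j a \<longrightarrow> M a i \<subseteq> S \<and> stationary_in UNIV (M a i)"
  obtain f :: "'a \<times> 'a \<Rightarrow> 'a" where "inj f"
    using infinite_imp_inj_pairing regular_ge_aleph2_infinite by blast
  then have decode: "inv f (f (a, i)) = (a, i)" for a i by simp
  have "\<exists>e. \<forall>i<j a. f (a, i) < e" for a
    using regular_ge_aleph2_image_lessThan_bounded[where h = "\<lambda>i. f (a, i)"] by simp
  then obtain e where e: "\<And>a i. i < j a \<Longrightarrow> f (a, i) < e a"
    by metis
  define U where "U \<beta> =
    (case inv f \<beta> of (a, i) \<Rightarrow> if \<beta> \<in> range f \<and> i < j a then M a i else S)" for \<beta>
  define T where "T \<beta> = U \<beta> \<inter> {e \<beta>..}" for \<beta>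
  have "T \<beta> \<subseteq> S \<and> stationary_in UNIV (T \<beta>)" for \<beta>
  proof -
    have "U \<beta> \<subseteq> S \<and> stationary_in UNIV (U \<beta>)"
      unfolding U_def using M stat by (auto split: prod.split)
    then show ?thesis
      unfolding T_def using stationary_in_UNIV_Int_atLeast regular_ge_aleph2_gt_ex by blast
  qed
  then obtain d where d: "uncountable_cf d" "\<And>\<beta>. \<beta> < d \<Longrightarrow> reflects_at (T \<beta>) d"
    using osr unfolding OSR_def by blast
  have "reflects_at (M a i) d" if "a < d" "i < j a" for a i
  proof -
    have "e a < d"
      using d(2)[OF \<open>a < d\<close>] reflects_at_Int_atLeast_imp_less unfolding T_def by blast
    then have "f (a, i) < d" using e[OF \<open>i < j a\<close>] by order
    moreover have "T (f (a, i)) \<subseteq> M a i"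
      unfolding T_def U_def decode using \<open>i < j a\<close> by auto
    ultimately show ?thesis using d(2) reflects_at_mono by blast
  qed
  with d(1) show "\<exists>g. uncountable_cf g \<and> (\<forall>a<g. \<forall>i<j a. reflects_at (M a i) g)" by blast
qed

end

lemma diagonal_matrix_reflection_imp_DSR:
  "diagonal_matrix_reflection S \<Longrightarrow> DSR UNIV S"
  unfolding diagonal_matrix_reflection_def DSR_def
  by (metis lessThan_iff uncountable_cf_club_in_lessThan)

lemma DSR_imp_uDSR: "DSR K S \<Longrightarrow> uDSR K S"
  unfolding DSR_def uDSR_def club_in_def by blast

lemma uDSR_imp_OSR:
  assumes "uDSR UNIV S"
  shows "OSR S"
  unfolding OSR_def
proof (intro allI impI)
  fix T :: "'a \<Rightarrow> 'a set"
  assume "\<forall>a. T a \<subseteq> S \<and> stationary_in UNIV (T a)"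
  then obtain g F where g: "uncountable_cf g" "unbounded_in {..<g} F"
    "\<forall>a\<in>F. \<forall>i<a. reflects_at (T i) g"
    using assms unfolding uDSR_def by (elim allE[of _ "\<lambda>a i. T i"] allE[of _ id]) auto
  then have "\<forall>a<g. reflects_at (T a) g"
    unfolding unbounded_in_def by (meson lessThan_iff)
  with g(1) show "\<exists>d. uncountable_cf d \<and> (\<forall>a<d. reflects_at (T a) d)" by blast
qed

theorem lemma2p3:
  fixes S :: "'a::wellorder set"
  assumes "regular_ge_aleph2 TYPE('a)"
    and "stationary_in UNIV S"
  shows "(uDSR UNIV S \<longleftrightarrow> DSR UNIV S) \<and> (DSR UNIV S \<longleftrightarrow> OSR S) \<and>
    (OSR S \<longleftrightarrow>
      (\<forall>(M::'a \<Rightarrow> 'a \<Rightarrow> 'a set) (j::'a \<Rightarrow> 'a).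
         (\<forall>a i. i < j a \<longrightarrow> M a i \<subseteq> S \<and> stationary_in UNIV (M a i)) \<longrightarrow>
         (\<exists>g. uncountable_cf g \<and> (\<forall>a<g. \<forall>i<j a. reflects_at (M a i) g))))"
  using uDSR_imp_OSR[of S] OSR_imp_diagonal_matrix_reflection[OF assms(1) _ assms(2)]
    diagonal_matrix_reflection_imp_DSR[of S] DSR_imp_uDSR[of UNIV S]
  unfolding diagonal_matrix_reflection_def by blast

end
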